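(* Let $A\subset\mathbb{R}^d$ be a finite set that minimally surrounds the origin. (i) For any critical simplex $X\subseteq A$, no point of $A\setminus X$ lies in the linear hull of $X$. (ii) If a critical simplex $X\subseteq A$ contains $k$ points of a critical $k$-simplex $Y\subseteq A$, then $X=Y$.
   Context: A point set in $\mathbb{R}^d$ surrounds the origin if the origin lies in the interior of its convex hull; it minimally surrounds the origin if it surrounds the origin but no proper subset does. A point set $S$ surrounds the origin in a linear subspace $E$ if $S$ spans $E$ and the origin lies in the relative interior of $\mathrm{conv}(S)$. A $k$-simplex is a set of $k+1$ affinely independent points; a simplex $N$ is critical if it surrounds the origin in its linear hull. *)

theory Defs
  imports "HOL-Analysis.Analysis"
begin

definition surrounds_origin :: "'a::euclidean_space set \<Rightarrow> bool" where
  "surrounds_origin S \<longleftrightarrow> 0 \<in> interior (convex hull S)"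

definition minimally_surrounds_origin :: "'a::euclidean_space set \<Rightarrow> bool" where
  "minimally_surrounds_origin S \<longleftrightarrow>
     surrounds_origin S \<and> (\<forall>T. T \<subset> S \<longrightarrow> \<not> surrounds_origin T)"

definition surrounds_origin_in :: "'a::euclidean_space set \<Rightarrow> 'a set \<Rightarrow> bool" where
  "surrounds_origin_in S E \<longleftrightarrow> span S = E \<and> 0 \<in> rel_interior (convex hull S)"

definition is_simplex :: "nat \<Rightarrow> 'a::euclidean_space set \<Rightarrow> bool" where
  "is_simplex k X \<longleftrightarrow> finite X \<and> card X = k + 1 \<and> \<not> affine_dependent X"

definition critical :: "'a::euclidean_space set \<Rightarrow> bool" where
  "critical N \<longleftrightarrow> (\<exists>k. is_simplex k N) \<and> surrounds_origin_in N (span N)"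

end

theory Submission
  imports Defs
begin

text \<open>(i) If a point \<open>a\<close> of \<open>A - X\<close> lay in the linear hull of a critical simplex \<open>X\<close>, then,
  since the origin is relatively interior to \<open>conv X\<close>, some small positive multiple \<open>d a\<close>
  would lie in \<open>conv X\<close>. Then \<open>conv (A - {a})\<close> contains \<open>d \<cdot> conv A\<close>, a neighbourhood of the
  origin, contradicting minimality.
  (ii) At most one point \<open>y\<close> of \<open>Y\<close> lies outside \<open>X\<close>; the positive barycentric relation of
  \<open>Y\<close> puts \<open>y\<close> in the span of the others, hence in \<open>span X\<close>, so by (i) \<open>Y \<subseteq> X\<close>. Finally
  \<open>conv Y\<close> is a face of the simplex \<open>conv X\<close> meeting its relative interior, so \<open>Y = X\<close>.\<close>

lemma criticalD:
  assumes "critical X"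
  shows "\<not> affine_dependent X" and "0 \<in> rel_interior (convex hull X)"
  using assms unfolding critical_def surrounds_origin_in_def is_simplex_def by auto

lemma scaleR_in_convex_hull_if_in_span:
  fixes a :: "'a::euclidean_space"
  assumes "0 \<in> rel_interior (convex hull X)" and "a \<in> span X"
  obtains d where "0 < d" "d \<le> 1" "d *\<^sub>R a \<in> convex hull X"
proof -
  obtain e where "e > 0" and e: "ball 0 e \<inter> affine hull X \<subseteq> convex hull X"
    using assms(1) mem_rel_interior_ball affine_hull_convex_hull by metis
  have "0 \<in> affine hull X"
    using assms(1) rel_interior_subset convex_hull_subset_affine_hull by blast
  then have "affine hull X = span X" by (rule affine_hull_span_0)
  define d where "d = min 1 (e / (norm a + 1))"
  have "norm a + 1 > 0" by (simp add: add_nonneg_pos)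
  then have "0 < d" "d \<le> 1"
    using \<open>e > 0\<close> by (auto simp: d_def)
  have "d \<le> e / (norm a + 1)" by (simp add: d_def)
  then have "norm (d *\<^sub>R a) \<le> e / (norm a + 1) * norm a"
    using \<open>0 < d\<close> mult_right_mono by fastforce
  also have "\<dots> < e"
    using \<open>e > 0\<close> \<open>norm a + 1 > 0\<close> by (simp add: field_simps)
  finally have "d *\<^sub>R a \<in> ball 0 e \<inter> affine hull X"
    using \<open>affine hull X = span X\<close> assms(2) by (simp add: span_mul)
  with e \<open>0 < d\<close> \<open>d \<le> 1\<close> that show thesis by blast
qed

text \<open>The hypotheses make \<open>conv T\<close> contain the image of \<open>conv S\<close> under the contraction by \<open>d\<close>.\<close>

lemma surrounds_origin_drop_point:
  fixes a :: "'a::euclidean_space"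
  assumes "surrounds_origin S" and "S \<subseteq> insert a T"
    and "0 \<in> convex hull T" and "0 < d" "d \<le> 1" "d *\<^sub>R a \<in> convex hull T"
  shows "surrounds_origin T"
proof -
  let ?f = "\<lambda>x. d *\<^sub>R x"
  have "?f ` S \<subseteq> convex hull T"
  proof
    fix y assume "y \<in> ?f ` S"
    then obtain b where "b \<in> S" "y = ?f b" by auto
    show "y \<in> convex hull T"
    proof (cases "b = a")
      case False
      then have "b \<in> convex hull T"
        using \<open>b \<in> S\<close> assms(2) by (intro hull_inc) auto
      then have "d *\<^sub>R b + (1 - d) *\<^sub>R 0 \<in> convex hull T"
        using assms(3-5) by (intro convexD[OF convex_convex_hull]) auto
      then show ?thesis using \<open>y = ?f b\<close> by simp
    next
      case True
      then show ?thesis using \<open>y = ?f b\<close> assms(6) by simp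
    qed
  qed
  then have "convex hull (?f ` S) \<subseteq> convex hull T"
    by (simp add: hull_minimal)
  then have "?f ` (convex hull S) \<subseteq> convex hull T"
    by (simp add: convex_hull_scaling)
  then have "?f ` interior (convex hull S) \<subseteq> convex hull T"
    using interior_subset by blast
  moreover have "open (?f ` interior (convex hull S))"
    using \<open>0 < d\<close> by (intro open_scaling open_interior) simp
  moreover have "0 \<in> ?f ` interior (convex hull S)"
    using assms(1) unfolding surrounds_origin_def by (metis image_eqI scaleR_zero_right)
  ultimately show ?thesis
    unfolding surrounds_origin_def by (meson interiorI)
qed

lemma minimally_surrounds_origin_not_in_span:
  fixes A :: "'a::euclidean_space set"
  assumes "minimally_surrounds_origin A" and "X \<subseteq> A"
    and "0 \<in> rel_interior (convex hull X)" and "a \<in> A - X"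
  shows "a \<notin> span X"
proof
  assume "a \<in> span X"
  then obtain d where "0 < d" "d \<le> 1" "d *\<^sub>R a \<in> convex hull X"
    by (rule scaleR_in_convex_hull_if_in_span[OF assms(3)])
  have "X \<subseteq> A - {a}" using assms(2,4) by auto
  then have hull_sub: "convex hull X \<subseteq> convex hull (A - {a})" by (rule hull_mono)
  have "0 \<in> convex hull X" using assms(3) rel_interior_subset by blast
  have "surrounds_origin A" using assms(1) unfolding minimally_surrounds_origin_def by blast
  then have "surrounds_origin (A - {a})"
  proof (rule surrounds_origin_drop_point)
    show "A \<subseteq> insert a (A - {a})" by blast
  qed (use hull_sub \<open>0 \<in> convex hull X\<close> \<open>0 < d\<close> \<open>d \<le> 1\<close> \<open>d *\<^sub>R a \<in> convex hull X\<close> in auto)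
  moreover have "A - {a} \<subset> A" using assms(4) by auto
  ultimately show False
    using assms(1) unfolding minimally_surrounds_origin_def by blast
qed

lemma in_span_delete_if_rel_interior_affine_independent:
  fixes Y :: "'a::euclidean_space set"
  assumes "\<not> affine_dependent Y" and "0 \<in> rel_interior (convex hull Y)" and "y \<in> Y"
  shows "y \<in> span (Y - {y})"
proof -
  have "0 \<in> {z. \<exists>u. (\<forall>x\<in>Y. 0 < u x) \<and> sum u Y = 1 \<and> (\<Sum>x\<in>Y. u x *\<^sub>R x) = z}"
    using assms(2) unfolding rel_interior_convex_hull_explicit[OF assms(1)] .
  then obtain u where u: "\<forall>x\<in>Y. 0 < u x" "(\<Sum>x\<in>Y. u x *\<^sub>R x) = 0"
    by blast
  have "finite Y" using assms(1) by (rule aff_independent_finite)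
  then have sum_eq: "u y *\<^sub>R y = - (\<Sum>x\<in>Y - {y}. u x *\<^sub>R x)"
    using u(2) sum.remove[OF _ assms(3), of "\<lambda>x. u x *\<^sub>R x"] by (simp add: eq_neg_iff_add_eq_0)
  have "u y \<noteq> 0" using u(1) assms(3) by force
  then have "y = inverse (u y) *\<^sub>R (u y *\<^sub>R y)" by simp
  also have "\<dots> = - (inverse (u y) *\<^sub>R (\<Sum>x\<in>Y - {y}. u x *\<^sub>R x))"
    unfolding sum_eq by simp
  also have "\<dots> \<in> span (Y - {y})"
    by (intro span_neg span_mul span_sum span_base) auto
  finally show ?thesis .
qed

lemma affine_independent_eq_if_origin_in_rel_interior:
  fixes X :: "'a::euclidean_space set"
  assumes "\<not> affine_dependent X" and "0 \<in> rel_interior (convex hull X)"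
    and "Y \<subseteq> X" and "0 \<in> convex hull Y"
  shows "Y = X"
proof (rule ccontr)
  assume "Y \<noteq> X"
  have "convex hull Y face_of convex hull X"
    using assms(1,3) face_of_convex_hull_affine_independent by blast
  moreover have "convex hull Y \<noteq> convex hull X"
  proof
    assume "convex hull Y = convex hull X"
    have "\<not> affine_dependent Y" using assms(1,3) affine_dependent_subset by blast
    then have "X \<subseteq> Y"
      using assms(1) \<open>convex hull Y = convex hull X\<close>
      by (metis extreme_point_of_convex_hull_affine_independent subsetI)
    with assms(3) \<open>Y \<noteq> X\<close> show False by blast
  qed
  ultimately have "convex hull Y \<inter> rel_interior (convex hull X) = {}"
    by (rule face_of_disjoint_rel_interior)
  with assms(2,4) show False by blast
qed

lemma critical_subset_if_card_inter:
  fixes A :: "'a::euclidean_space set"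
  assumes "minimally_surrounds_origin A" and "X \<subseteq> A" "critical X"
    and "Y \<subseteq> A" "is_simplex k Y" "critical Y" "card (X \<inter> Y) \<ge> k"
  shows "Y \<subseteq> X"
proof
  fix y assume "y \<in> Y"
  show "y \<in> X"
  proof (rule ccontr)
    assume "y \<notin> X"
    have "finite Y" "card Y = k + 1" using assms(5) is_simplex_def by auto
    then have "card (Y - X) \<le> 1"
      using assms(7) by (simp add: card_Diff_subset_Int Int_commute)
    then have "Y - {y} \<subseteq> X"
      using \<open>y \<in> Y\<close> \<open>y \<notin> X\<close> \<open>finite Y\<close> card_le_Suc0_iff_eq[of "Y - X"] by auto
    then have "span (Y - {y}) \<subseteq> span X" by (rule span_mono)
    moreover have "y \<in> span (Y - {y})"
      using criticalD[OF assms(6)] \<open>y \<in> Y\<close> in_span_delete_if_rel_interior_affine_independent by blast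
    ultimately show False
      using minimally_surrounds_origin_not_in_span[OF assms(1,2) criticalD(2)[OF assms(3)]]
        \<open>y \<in> Y\<close> \<open>y \<notin> X\<close> assms(4) by blast
  qed
qed

theorem lemma16:
  fixes A :: "'a::euclidean_space set"
  assumes "finite A" and "minimally_surrounds_origin A"
  shows "(\<forall>X. X \<subseteq> A \<and> critical X \<longrightarrow> (\<forall>a \<in> A - X. a \<notin> span X))
       \<and> (\<forall>X Y k. X \<subseteq> A \<and> critical X \<and> Y \<subseteq> A \<and> is_simplex k Y \<and> critical Y
              \<and> card (X \<inter> Y) \<ge> k \<longrightarrow> X = Y)"
proof (intro conjI allI impI ballI)
  fix X a assume "X \<subseteq> A \<and> critical X" "a \<in> A - X"
  then show "a \<notin> span X"
    using minimally_surrounds_origin_not_in_span[OF assms(2)] criticalD(2) by blast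
next
  fix X Y k
  assume h: "X \<subseteq> A \<and> critical X \<and> Y \<subseteq> A \<and> is_simplex k Y \<and> critical Y \<and> k \<le> card (X \<inter> Y)"
  then have "Y \<subseteq> X"
    using critical_subset_if_card_inter[OF assms(2)] by blast
  moreover have "0 \<in> convex hull Y"
    using h criticalD(2) rel_interior_subset by blast
  ultimately show "X = Y"
    using h criticalD affine_independent_eq_if_origin_in_rel_interior by metis
qed

end
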